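(* For $m,N\in\mathbb N^+$, let $\mathcal S(m,N)$ be the set of solutions $k\in(0,\pi)$ of $$-\frac{1}{2^{m+1}-1}\tan\Big(\frac k2\Big)=\tan(Nk),$$ and let $\mathcal S(m)=\bigcup_{N\in\mathbb N^+}\mathcal S(m,N)$. Then: (1) for $m_1\ne m_2$, $\mathcal S(m_1)\cap\mathcal S(m_2)=\mathcal S(m_1)\cap\pi\mathbb Q=\mathcal S(m_2)\cap\pi\mathbb Q=\emptyset$; (2) for every $m$ and every $N_1\ne N_2$, $\mathcal S(m,N_1)\cap\mathcal S(m,N_2)=\emptyset$. *)

theory Defs
  imports Complex_Main
begin

text \<open>S(m,N): solutions k in (0,pi) of -(1/(2^(m+1)-1)) tan(k/2) = tan(N k).
  The guard cos(N k) ~= 0 records that tan(N k) must be defined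
  (Isabelle's tan is total, with value 0 at poles).\<close>
definition Ssol :: "nat \<Rightarrow> nat \<Rightarrow> real set" where
  "Ssol m N = {k. 0 < k \<and> k < pi \<and> cos (real N * k) \<noteq> 0 \<and>
      - (1 / (2 ^ (m + 1) - 1)) * tan (k / 2) = tan (real N * k)}"

definition Sall :: "nat \<Rightarrow> real set" where
  "Sall m = (\<Union>N\<in>{N. N \<ge> 1}. Ssol m N)"

definition piRat :: "real set" where
  "piRat = {pi * of_rat q | q. True}"

end

theory Submission
  imports Defs "HOL-Computational_Algebra.Polynomial" "Jordan_Normal_Form.Char_Poly"
begin

text \<open>
  Put \<open>z = e^(ik)\<close>. The tangent equation becomes
  \<open>z^(2N) (2^m z + 2^m - 1) = (2^m - 1) z + 2^m\<close>, equivalently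
  \<open>z (2^m z + 2^m - 1) (z^(2N-1) - 1) = 2^m (1 - z^2)\<close>. We argue in the ring of algebraic
  numbers that are integral at the primes above 2, in which every number congruent to 1 mod 2
  is a unit.

  If \<open>z\<close> is a root of unity (as for \<open>k \<in> \<pi>\<rat>\<close>, or for \<open>k\<close> in both \<open>S(m,N\<^sub>1)\<close> and \<open>S(m,N\<^sub>2)\<close>,
  where \<open>z^(2(N\<^sub>1-N\<^sub>2)) = 1\<close>), then \<open>z\<close> is integral, so \<open>z^(2N-1)\<close> is a root of unity
  congruent to 1 mod \<open>2^m\<close>. Such a root of unity is \<open>\<plusminus>1\<close>, and both values contradict
  the equation.

  If \<open>z\<close> solves the equations for \<open>m\<^sub>1\<close> and \<open>m\<^sub>2\<close>, then \<open>1/(1+z)\<close> is a root of monic integer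
  polynomials with constant terms \<open>2^m\<^sub>1\<close>, \<open>2^m\<^sub>2\<close> and odd linear coefficients; comparing the
  two relations shows that \<open>1 + z\<close>, hence \<open>z\<close>, is integral at 2. Then \<open>z^(2N\<^sub>i-1) - 1\<close> is
  \<open>2^m\<^sub>i\<close> times a unit, while all \<open>z^e - 1\<close> with odd \<open>e\<close> agree up to units (each is
  \<open>z^g - 1\<close> times a geometric sum of odd length, \<open>g\<close> the gcd of the exponents). Hence \<open>m\<^sub>1 = m\<^sub>2\<close>.
\<close>

section \<open>Algebraic integers form a ring\<close>

inductive_set int_span :: "'a::comm_ring_1 set \<Rightarrow> 'a set" for G where
  int_span_zero: "0 \<in> int_span G"
| int_span_gen: "g \<in> G \<Longrightarrow> g \<in> int_span G"
| int_span_add: "a \<in> int_span G \<Longrightarrow> b \<in> int_span G \<Longrightarrow> a + b \<in> int_span G"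
| int_span_uminus: "a \<in> int_span G \<Longrightarrow> - a \<in> int_span G"

lemma int_span_of_nat_mult: "a \<in> int_span G \<Longrightarrow> of_nat n * a \<in> int_span G"
  by (induction n) (auto simp: algebra_simps intro: int_span.intros)

lemma int_span_of_int_mult:
  assumes "a \<in> int_span G"
  shows "of_int k * a \<in> int_span G"
proof (cases k rule: int_cases)
  case (nonneg n)
  then show ?thesis using int_span_of_nat_mult[OF assms, of n] by simp
next
  case (neg n)
  then have "of_int k * a = - (of_nat (Suc n) * a)"
    by (simp only: of_int_minus of_int_of_nat_eq mult_minus_left)
  then show ?thesis using int_span_uminus[OF int_span_of_nat_mult[OF assms]] by metis
qed

lemma int_span_sum: "(\<And>i. i \<in> I \<Longrightarrow> f i \<in> int_span G) \<Longrightarrow> sum f I \<in> int_span G"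
  by (induction I rule: infinite_finite_induct) (auto intro: int_span.intros)

lemma int_span_explicit:
  assumes "finite G" "x \<in> int_span G"
  shows "\<exists>c. x = (\<Sum>g\<in>G. of_int (c g) * g)"
  using assms(2)
proof induction
  case int_span_zero
  show ?case by (rule exI[of _ "\<lambda>_. 0"]) simp
next
  case (int_span_gen g)
  have "(\<Sum>h\<in>G. of_int (if h = g then 1 else 0) * h) = (\<Sum>h\<in>G. if h = g then g else 0)"
    by (rule sum.cong) auto
  also have "\<dots> = g" using int_span_gen assms(1) by simp
  finally show ?case by (metis (no_types))
next
  case (int_span_add a b)
  then obtain c d where "a = (\<Sum>g\<in>G. of_int (c g) * g)" "b = (\<Sum>g\<in>G. of_int (d g) * g)"
    by blast
  then show ?case
    by (intro exI[of _ "\<lambda>g. c g + d g"]) (simp add: sum.distrib algebra_simps)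
next
  case (int_span_uminus a)
  then obtain c where "a = (\<Sum>g\<in>G. of_int (c g) * g)" by blast
  then show ?case
    by (intro exI[of _ "\<lambda>g. - c g"]) (simp add: sum_negf)
qed

lemma int_span_mult_closed:
  assumes "\<And>g. g \<in> G \<Longrightarrow> y * g \<in> int_span G" "x \<in> int_span G"
  shows "y * x \<in> int_span G"
  using assms(2)
  by induction (auto simp: assms(1) distrib_left intro: int_span.intros)

lemma int_span_mult:
  assumes "a \<in> int_span G" "b \<in> int_span H"
  shows "a * b \<in> int_span ((\<lambda>(g, h). g * h) ` (G \<times> H))"
  using assms(1)
proof induction
  case (int_span_gen g)
  from assms(2) show ?case
  proof induction
    case (int_span_gen h)
    then show ?case using \<open>g \<in> G\<close> by (intro int_span.int_span_gen) force
  qed (auto simp: distrib_left intro: int_span.intros)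
qed (auto simp: distrib_right intro: int_span.intros)

lemma algebraic_int_if_int_matrix_eigenvalue:
  fixes y :: "'a::field_char_0"
  assumes A: "A \<in> carrier_mat n n" and "eigenvalue (map_mat of_int A) y"
  shows "algebraic_int y"
proof -
  have "(map_mat of_int A :: 'a mat) \<in> carrier_mat n n" using A by simp
  then have "poly (char_poly (map_mat of_int A)) y = 0"
    using eigenvalue_root_char_poly assms(2) by blast
  then have "poly (of_int_poly (char_poly A)) y = 0"
    by (simp only: of_int_hom.char_poly_hom[OF A])
  moreover have "lead_coeff (char_poly A) = 1"
    using degree_monic_char_poly[OF A] by simp
  ultimately show ?thesis unfolding algebraic_int_altdef_ipoly by blast
qed

text \<open>\<open>y\<close> is an eigenvalue of the integer matrix of multiplication by \<open>y\<close> on \<open>G\<close>.\<close>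
lemma algebraic_int_if_int_span_closed:
  fixes y :: "'a::field_char_0"
  assumes fin: "finite G" and g0: "g0 \<in> G" "g0 \<noteq> 0"
    and closed: "\<And>g. g \<in> G \<Longrightarrow> y * g \<in> int_span G"
  shows "algebraic_int y"
proof -
  obtain L where L: "distinct L" "set L = G" using finite_distinct_list[OF fin] by blast
  define n where "n = length L"
  have "\<forall>j. \<exists>c. j < n \<longrightarrow> y * L ! j = (\<Sum>g\<in>G. of_int (c g) * g)"
    using closed int_span_explicit[OF fin] L unfolding n_def by (metis nth_mem)
  then obtain C where C: "\<And>j. j < n \<Longrightarrow> y * L ! j = (\<Sum>g\<in>G. of_int (C j g) * g)"
    by metis
  have sum_G: "(\<Sum>g\<in>G. f g) = (\<Sum>k<n. f (L ! k))" for f :: "'a \<Rightarrow> 'a"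
    unfolding L(2)[symmetric] n_def
    by (simp add: sum.distinct_set_conv_list[OF L(1)] sum_list_sum_nth atLeast0LessThan)
  define A :: "int mat" where "A = mat n n (\<lambda>(j, k). C j (L ! k))"
  define v :: "'a vec" where "v = vec n (\<lambda>k. L ! k)"
  have A: "A \<in> carrier_mat n n" unfolding A_def by simp
  have v: "v \<in> carrier_vec n" unfolding v_def by simp
  have "v \<noteq> 0\<^sub>v n"
  proof
    assume "v = 0\<^sub>v n"
    from g0 L obtain k where "k < n" "L ! k = g0" unfolding n_def by (metis in_set_conv_nth)
    with \<open>v = 0\<^sub>v n\<close> g0(2) show False unfolding v_def by (metis index_vec index_zero_vec(1))
  qed
  moreover have "map_mat of_int A *\<^sub>v v = y \<cdot>\<^sub>v v"
  proof (rule eq_vecI)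
    fix j assume "j < dim_vec (y \<cdot>\<^sub>v v)"
    then have j: "j < n" using v by simp
    have "(map_mat of_int A *\<^sub>v v) $ j = (\<Sum>k<n. of_int (C j (L ! k)) * L ! k)"
      using j unfolding A_def v_def by (simp add: mult_mat_vec_def scalar_prod_def atLeast0LessThan)
    also have "\<dots> = y * L ! j" using C[OF j] sum_G by simp
    finally show "(map_mat of_int A *\<^sub>v v) $ j = (y \<cdot>\<^sub>v v) $ j" using j v unfolding v_def by simp
  qed (use v A in simp)
  ultimately have "eigenvalue (map_mat of_int A) y"
    unfolding eigenvalue_def eigenvector_def using v A by auto
  then show ?thesis by (rule algebraic_int_if_int_matrix_eigenvalue[OF A])
qed

lemma algebraic_int_imp_int_span_closed:
  fixes y :: "'a::field_char_0"
  assumes "algebraic_int y"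
  obtains G where "finite G" "1 \<in> G" "\<And>g. g \<in> G \<Longrightarrow> y * g \<in> int_span G"
proof -
  obtain p where p: "poly (of_int_poly p) y = 0" "lead_coeff p = 1"
    using assms unfolding algebraic_int_altdef_ipoly by blast
  define d where "d = degree p"
  have "d > 0"
  proof (rule ccontr)
    assume "\<not> d > 0"
    then have "p = 1" using p(2) degree_0_id[of p] by (simp add: d_def one_pCons)
    then show False using p(1) by simp
  qed
  define G where "G = (\<lambda>i. y ^ i) ` {..<d}"
  have "y ^ d = - (\<Sum>i<d. of_int (coeff p i) * y ^ i)"
    using p unfolding poly_altdef d_def
    by (simp add: coeff_map_poly degree_map_poly lessThan_Suc_atMost[symmetric]
        eq_neg_iff_add_eq_0 add.commute)
  also have "\<dots> \<in> int_span G"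
    by (intro int_span_uminus int_span_sum int_span_of_int_mult int_span_gen) (auto simp: G_def)
  finally have top: "y ^ d \<in> int_span G" .
  show ?thesis
  proof
    show "finite G" "1 \<in> G" using \<open>d > 0\<close> by (auto simp: G_def intro: image_eqI[of _ _ 0])
  next
    fix g assume "g \<in> G"
    then obtain i where i: "i < d" "g = y ^ i" unfolding G_def by auto
    show "y * g \<in> int_span G"
    proof (cases "Suc i < d")
      case True
      then show ?thesis using i by (auto simp: G_def intro!: int_span_gen image_eqI[of _ _ "Suc i"])
    next
      case False
      then have "d = Suc i" using i(1) by simp
      then show ?thesis using top i(2) by simp
    qed
  qed
qed

lemma algebraic_int_add_mult:
  fixes x y :: "'a::field_char_0"
  assumes "algebraic_int x" "algebraic_int y"
  shows "algebraic_int (x + y)" "algebraic_int (x * y)"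
proof -
  obtain G where G: "finite G" "1 \<in> G" "\<And>g. g \<in> G \<Longrightarrow> x * g \<in> int_span G"
    using algebraic_int_imp_int_span_closed[OF assms(1)] by blast
  obtain H where H: "finite H" "1 \<in> H" "\<And>h. h \<in> H \<Longrightarrow> y * h \<in> int_span H"
    using algebraic_int_imp_int_span_closed[OF assms(2)] by blast
  define P where "P = (\<lambda>(g, h). g * h) ` (G \<times> H)"
  have P: "finite P" "1 \<in> P"
    using G H unfolding P_def by (auto intro: image_eqI[of _ _ "(1, 1)"])
  have x: "x * p \<in> int_span P" if "p \<in> P" for p
    using that int_span_mult[OF G(3) int_span_gen] unfolding P_def by (auto simp: mult.assoc)
  have y: "y * p \<in> int_span P" if "p \<in> P" for p
    using that int_span_mult[OF int_span_gen H(3)] unfolding P_def by (auto simp: algebra_simps)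
  show "algebraic_int (x + y)"
    by (rule algebraic_int_if_int_span_closed[OF P(1,2) one_neq_zero])
      (use x y in \<open>auto simp: distrib_right intro: int_span_add\<close>)
  show "algebraic_int (x * y)"
    by (rule algebraic_int_if_int_span_closed[OF P(1,2) one_neq_zero])
      (use int_span_mult_closed[OF x y] in \<open>simp add: mult.assoc\<close>)
qed

lemmas algebraic_int_add = algebraic_int_add_mult(1)
lemmas algebraic_int_mult = algebraic_int_add_mult(2)

lemma algebraic_int_diff:
  fixes x y :: "'a::field_char_0"
  shows "algebraic_int x \<Longrightarrow> algebraic_int y \<Longrightarrow> algebraic_int (x - y)"
  using algebraic_int_add[of x "- y"] by simp

lemma algebraic_int_power:
  fixes x :: "'a::field_char_0"
  shows "algebraic_int x \<Longrightarrow> algebraic_int (x ^ n)"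
  by (induction n) (simp_all add: algebraic_int_mult)

lemma poly_of_int_poly_pCons:
  "poly (of_int_poly (pCons a p)) x = of_int a + x * poly (of_int_poly p) (x :: 'a::comm_ring_1)"
  by (cases "a = 0 \<and> p = 0") simp_all

lemma algebraic_int_poly_of_int:
  fixes x :: "'a::field_char_0"
  assumes "algebraic_int x"
  shows "algebraic_int (poly (of_int_poly p) x)"
  by (induction p) (simp_all add: algebraic_int_add algebraic_int_mult assms)

lemma poly_of_int_poly_factor:
  fixes x :: "'a::field_char_0"
  assumes "algebraic_int x"
  shows "\<exists>Y. algebraic_int Y \<and> poly (of_int_poly p) x = of_int (poly p a) + (x - of_int a) * Y"
proof (induction p)
  case (pCons c p)
  then obtain Y where Y: "algebraic_int Y"
    "poly (of_int_poly p) x = of_int (poly p a) + (x - of_int a) * Y" by blast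
  show ?case
  proof (intro exI conjI)
    show "algebraic_int (of_int (poly p a) + x * Y)"
      using Y(1) assms by (simp add: algebraic_int_add algebraic_int_mult)
    show "poly (of_int_poly (pCons c p)) x =
        of_int (poly (pCons c p) a) + (x - of_int a) * (of_int (poly p a) + x * Y)"
      unfolding poly_of_int_poly_pCons Y(2) by (simp add: algebra_simps)
  qed
qed auto

lemma algebraic_int_double_root:
  fixes \<delta> :: "'a::field_char_0"
  assumes "algebraic_int \<delta>"
  obtains h where "poly (of_int_poly h) (2 * \<delta>) = 0" "lead_coeff h = 1"
    "\<And>k. k < degree h \<Longrightarrow> even (coeff h k)"
proof -
  obtain g where g: "poly (of_int_poly g) \<delta> = 0" "lead_coeff g = 1"
    using assms unfolding algebraic_int_altdef_ipoly by blast
  define d where "d = degree g"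
  define h where "h = (\<Sum>k\<le>d. monom (coeff g k * 2 ^ (d - k)) k)"
  have coeff_h: "coeff h k = (if k \<le> d then coeff g k * 2 ^ (d - k) else 0)" for k
    unfolding h_def by (simp add: coeff_sum coeff_monom)
  have "degree h \<le> d"
    unfolding h_def by (intro degree_sum_le) (auto intro: order.trans[OF degree_monom_le])
  moreover have "coeff h d = 1" using g(2) unfolding coeff_h d_def by simp
  ultimately have "degree h = d" by (metis le_antisym le_degree zero_neq_one)
  have "poly (of_int_poly h) (2 * \<delta>) = (\<Sum>k\<le>d. 2 ^ d * (of_int (coeff g k) * \<delta> ^ k))"
  proof -
    have "2 ^ (d - k) * (2 * \<delta>) ^ k = 2 ^ d * \<delta> ^ k" if "k \<le> d" for k :: nat
      using that by (simp add: power_mult_distrib flip: power_add)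
    then show ?thesis
      unfolding h_def by (auto simp: of_int_poly_hom.hom_sum poly_sum poly_monom intro!: sum.cong)
  qed
  also have "\<dots> = 2 ^ d * poly (of_int_poly g) \<delta>"
    unfolding poly_altdef d_def by (simp add: sum_distrib_left coeff_map_poly degree_map_poly)
  finally show ?thesis
    using that g(1) \<open>degree h = d\<close> \<open>coeff h d = 1\<close> by (simp add: coeff_h)
qed

section \<open>Numbers integral at 2\<close>

text \<open>The localisation of the algebraic integers at the odd integers, i.e. the algebraic
  numbers that are integral at every prime above 2.\<close>
definition two_integral :: "'a::field_char_0 \<Rightarrow> bool" where
  "two_integral x \<longleftrightarrow> (\<exists>r. odd r \<and> algebraic_int (of_int r * x))"

lemma algebraic_int_imp_two_integral: "algebraic_int x \<Longrightarrow> two_integral x"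
  unfolding two_integral_def by (intro exI[of _ 1]) simp

lemma two_integral_const [simp]:
  "two_integral (0 :: 'a::field_char_0)" "two_integral (1 :: 'a)" "two_integral (numeral n :: 'a)"
  "two_integral (of_int i :: 'a)" "two_integral (of_nat k :: 'a)"
  by (simp_all add: algebraic_int_imp_two_integral)

lemma two_integral_add:
  assumes "two_integral x" "two_integral y"
  shows "two_integral (x + y)"
proof -
  obtain r s where r: "odd r" "algebraic_int (of_int r * x)"
    and s: "odd s" "algebraic_int (of_int s * y)"
    using assms unfolding two_integral_def by blast
  have "algebraic_int (of_int s * (of_int r * x) + of_int r * (of_int s * y))"
    using r s by (simp add: algebraic_int_add algebraic_int_mult)
  then have "algebraic_int (of_int (r * s) * (x + y))"
    by (simp add: algebra_simps)
  then show ?thesis unfolding two_integral_def using r s by (intro exI[of _ "r * s"]) simp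
qed

lemma two_integral_mult:
  assumes "two_integral x" "two_integral y"
  shows "two_integral (x * y)"
proof -
  obtain r s where r: "odd r" "algebraic_int (of_int r * x)"
    and s: "odd s" "algebraic_int (of_int s * y)"
    using assms unfolding two_integral_def by blast
  have "algebraic_int ((of_int r * x) * (of_int s * y))"
    by (rule algebraic_int_mult[OF r(2) s(2)])
  then have "algebraic_int (of_int (r * s) * (x * y))"
    by (simp add: ac_simps)
  then show ?thesis unfolding two_integral_def using r s by (intro exI[of _ "r * s"]) simp
qed

lemma two_integral_minus: "two_integral x \<Longrightarrow> two_integral (- x)"
  unfolding two_integral_def by (metis algebraic_int_minus mult_minus_right)

lemma two_integral_diff: "two_integral x \<Longrightarrow> two_integral y \<Longrightarrow> two_integral (x - y)"
  using two_integral_add[of x "- y"] two_integral_minus[of y] by simp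

lemma two_integral_power: "two_integral x \<Longrightarrow> two_integral (x ^ n)"
  by (induction n) (simp_all add: two_integral_mult)

lemma two_integral_sum: "(\<And>i. i \<in> I \<Longrightarrow> two_integral (f i)) \<Longrightarrow> two_integral (sum f I)"
  by (induction I rule: infinite_finite_induct) (simp_all add: two_integral_add)

lemma two_integral_cnj: "two_integral x \<Longrightarrow> two_integral (cnj x)"
  unfolding two_integral_def by (metis algebraic_int_cnj complex_cnj_mult complex_cnj_of_int)

lemma two_integral_half_int_imp_even:
  assumes "two_integral (of_int s / 2 :: 'a::field_char_0)"
  shows "even s"
proof -
  obtain r where r: "odd r" "algebraic_int (of_int r * (of_int s / 2) :: 'a)"
    using assms unfolding two_integral_def by blast
  have "(of_int (r * s) / 2 :: 'a) \<in> \<int>"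
    using rational_algebraic_int_is_int[of "of_int (r * s) / 2 :: 'a"] r(2) by simp
  then obtain k where "(of_int (r * s) / 2 :: 'a) = of_int k" by (elim Ints_cases)
  then have "(of_int (r * s) :: 'a) = of_int (2 * k)" by (simp add: field_simps)
  then have "r * s = 2 * k" by (simp only: of_int_eq_iff)
  then show ?thesis using r(1) by (metis dvd_triv_left even_mult_iff)
qed

lemma not_two_integral_inverse_power_2:
  assumes "0 < d"
  shows "\<not> two_integral (1 / 2 ^ d :: 'a::field_char_0)"
proof
  assume "two_integral (1 / 2 ^ d :: 'a)"
  then have "two_integral (of_int (2 ^ (d - 1)) * (1 / 2 ^ d) :: 'a)"
    by (rule two_integral_mult[OF two_integral_const(4)])
  moreover have "of_int (2 ^ (d - 1)) * (1 / 2 ^ d) = (of_int 1 / 2 :: 'a)"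
    using assms by (cases d) simp_all
  ultimately have "two_integral (of_int 1 / 2 :: 'a)" by metis
  then have "even (1::int)" by (rule two_integral_half_int_imp_even)
  then show False by simp
qed

lemma odd_plus_two_algebraic_int_divides_odd:
  fixes \<delta> :: "'a::field_char_0"
  assumes \<delta>: "algebraic_int \<delta>" and "odd w"
  obtains s where "odd s" "of_int w + 2 * \<delta> \<noteq> 0" "algebraic_int (of_int s / (of_int w + 2 * \<delta>))"
proof -
  define u where "u = of_int w + 2 * \<delta>"
  obtain h where h: "poly (of_int_poly h) (2 * \<delta>) = 0" "lead_coeff h = 1"
    "\<And>k. k < degree h \<Longrightarrow> even (coeff h k)"
    using algebraic_int_double_root[OF \<delta>] by blast
  obtain Y where Y: "algebraic_int Y"
    "poly (of_int_poly h) (2 * \<delta>) = of_int (poly h (- w)) + (2 * \<delta> - of_int (- w)) * Y"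
    using poly_of_int_poly_factor[of "2 * \<delta>" h "- w"] \<delta> by (auto simp: algebraic_int_mult)
  have sY: "of_int (poly h (- w)) + u * Y = 0"
    using h(1) Y(2) unfolding u_def by (simp add: algebra_simps)
  have "poly h (- w) = (\<Sum>k<degree h. coeff h k * (- w) ^ k) + (- w) ^ degree h"
    using h(2) unfolding poly_altdef by (simp add: lessThan_Suc_atMost[symmetric])
  moreover have "even (\<Sum>k<degree h. coeff h k * (- w) ^ k)"
    using h(3) by (intro dvd_sum) simp
  ultimately have "odd (poly h (- w))" using \<open>odd w\<close> by simp
  moreover from this have "u \<noteq> 0" using sY by auto
  moreover have "of_int (poly h (- w)) / u = - Y"
    using sY \<open>u \<noteq> 0\<close> by (simp add: field_simps eq_neg_iff_add_eq_0)
  ultimately show ?thesis using that Y(1) unfolding u_def by simp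
qed

definition one_mod_two :: "'a::field_char_0 \<Rightarrow> bool" where
  "one_mod_two x \<longleftrightarrow> two_integral ((x - 1) / 2)"

lemma one_mod_two_imp_two_integral:
  assumes "one_mod_two x"
  shows "two_integral x"
proof -
  have "two_integral (1 + 2 * ((x - 1) / 2))"
    using assms unfolding one_mod_two_def by (intro two_integral_add two_integral_mult) simp_all
  moreover have "1 + 2 * ((x - 1) / 2) = x" by (simp add: field_simps)
  ultimately show ?thesis by metis
qed

lemma one_mod_two_mult:
  assumes "one_mod_two x" "one_mod_two y"
  shows "one_mod_two (x * y)"
proof -
  have "two_integral (x * ((y - 1) / 2) + (x - 1) / 2)"
    using assms one_mod_two_imp_two_integral[OF assms(1)] unfolding one_mod_two_def
    by (intro two_integral_add two_integral_mult)
  moreover have "x * ((y - 1) / 2) + (x - 1) / 2 = (x * y - 1) / 2" by (simp add: field_simps)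
  ultimately show ?thesis unfolding one_mod_two_def by metis
qed

lemma one_mod_two_power: "one_mod_two x \<Longrightarrow> one_mod_two (x ^ n)"
  by (induction n) (simp_all add: one_mod_two_mult one_mod_two_def[of 1])

lemma one_mod_two_inverse:
  assumes "one_mod_two x"
  shows "x \<noteq> 0" "two_integral (1 / x)"
proof -
  obtain r where r: "odd r" "algebraic_int (of_int r * ((x - 1) / 2))"
    using assms unfolding one_mod_two_def two_integral_def by blast
  have rx: "of_int r * x = of_int r + 2 * (of_int r * ((x - 1) / 2))"
    by (simp add: field_simps)
  obtain s where s: "odd s" "of_int r * x \<noteq> 0" "algebraic_int (of_int s / (of_int r * x))"
    using odd_plus_two_algebraic_int_divides_odd[OF r(2) r(1)] unfolding rx[symmetric] by blast
  then show "x \<noteq> 0" by simp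
  have "algebraic_int (of_int r * (of_int s / (of_int r * x)))"
    by (rule algebraic_int_mult[OF algebraic_int_of_int s(3)])
  moreover have "of_int r * (of_int s / (of_int r * x)) = of_int s * (1 / x)"
    using s(2) by (simp add: field_simps)
  ultimately show "two_integral (1 / x)"
    unfolding two_integral_def using s(1) by metis
qed

lemma one_mod_two_geometric_sum:
  assumes "one_mod_two x" "odd k"
  shows "one_mod_two (\<Sum>j<k. x ^ j)"
proof -
  have "((\<Sum>j<k. x ^ j) - 1) / 2 = (\<Sum>j<k. (x ^ j - 1) / 2) + of_nat (k div 2)"
  proof -
    have "(\<Sum>j<k. x ^ j) - 1 = (\<Sum>j<k. x ^ j - 1) + (of_nat k - 1)"
      by (simp add: sum_subtractf)
    also have "k = 2 * (k div 2) + 1" using \<open>odd k\<close> by presburger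
    then have "(of_nat k - 1 :: 'a) = 2 * of_nat (k div 2)"
      by (metis add_diff_cancel_right' of_nat_1 of_nat_add of_nat_mult of_nat_numeral)
    finally show ?thesis by (simp add: add_divide_distrib sum_divide_distrib)
  qed
  moreover have "two_integral ((\<Sum>j<k. (x ^ j - 1) / 2) + of_nat (k div 2))"
    using one_mod_two_power[OF assms(1)] unfolding one_mod_two_def
    by (intro two_integral_add two_integral_sum) simp_all
  ultimately show ?thesis unfolding one_mod_two_def by metis
qed

lemma one_mod_two_power_gcd:
  assumes "two_integral x" "one_mod_two (x ^ a)" "one_mod_two (x ^ b)" "a \<noteq> 0"
  shows "one_mod_two (x ^ gcd a b)"
proof -
  obtain u v where uv: "a * u = b * v + gcd a b" using bezout_nat[OF assms(4)] by blast
  define X where "X = x ^ gcd a b"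
  have "(x ^ a) ^ u = (x ^ b) ^ v * X"
    unfolding X_def by (simp flip: power_mult power_add add: uv)
  then have "((x ^ a) ^ u - 1) / 2 - X * (((x ^ b) ^ v - 1) / 2) = (X - 1) / 2"
    by (simp add: field_simps)
  moreover have "two_integral (((x ^ a) ^ u - 1) / 2 - X * (((x ^ b) ^ v - 1) / 2))"
    using one_mod_two_power[OF assms(2)] one_mod_two_power[OF assms(3)]
      two_integral_power[OF assms(1)]
    unfolding one_mod_two_def X_def by (intro two_integral_diff two_integral_mult)
  ultimately show ?thesis unfolding one_mod_two_def X_def by metis
qed

text \<open>Both are \<open>x ^ gcd a b - 1\<close> times a geometric sum of odd length.\<close>
lemma odd_powers_minus_one_associated:
  assumes "two_integral x" "one_mod_two (x ^ a)" "one_mod_two (x ^ b)" "odd a" "odd b"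
  obtains S T where "one_mod_two S" "one_mod_two T" "(x ^ a - 1) * T = (x ^ b - 1) * S"
proof -
  define X where "X = x ^ gcd a b"
  have X: "one_mod_two X"
    unfolding X_def using assms odd_pos[OF assms(4)] by (intro one_mod_two_power_gcd) auto
  have factor: "x ^ c - 1 = (X - 1) * (\<Sum>j<c div gcd a b. X ^ j)"
    and odd_quotient: "odd (c div gcd a b)" if "c = a \<or> c = b" for c
  proof -
    have "c = gcd a b * (c div gcd a b)" using that by auto
    then have "x ^ c = X ^ (c div gcd a b)" unfolding X_def by (metis power_mult)
    then show "x ^ c - 1 = (X - 1) * (\<Sum>j<c div gcd a b. X ^ j)" by (simp add: power_diff_1_eq)
    show "odd (c div gcd a b)"
      using that assms(4,5) by (metis dvd_mult_div_cancel gcd_dvd1 gcd_dvd2 even_mult_iff)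
  qed
  show ?thesis
  proof
    show "one_mod_two (\<Sum>j<a div gcd a b. X ^ j)" "one_mod_two (\<Sum>j<b div gcd a b. X ^ j)"
      using one_mod_two_geometric_sum[OF X] odd_quotient by auto
    show "(x ^ a - 1) * (\<Sum>j<b div gcd a b. X ^ j) = (x ^ b - 1) * (\<Sum>j<a div gcd a b. X ^ j)"
      using factor by simp
  qed
qed

lemma one_mod_two_square_neq_minus_one:
  assumes "one_mod_two x"
  shows "x ^ 2 \<noteq> - 1"
proof
  assume sq: "x ^ 2 = - 1"
  define y where "y = (x - 1) / 2"
  have "y ^ 2 * x = (x ^ 2 * x - 2 * x ^ 2 + x) / 4"
    unfolding y_def by (simp add: field_simps power2_eq_square)
  also have "\<dots> = of_int 1 / 2" unfolding sq by simp
  finally have "two_integral (of_int 1 / 2 :: 'a)"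
    using assms one_mod_two_imp_two_integral[OF assms] unfolding one_mod_two_def y_def
    by (metis two_integral_mult two_integral_power)
  then have "even (1::int)" by (rule two_integral_half_int_imp_even)
  then show False by simp
qed

lemma one_mod_two_odd_root_of_unity:
  assumes "one_mod_two x" "x ^ q = 1" "odd q"
  shows "x = 1"
proof (rule ccontr)
  assume "x \<noteq> 1"
  moreover have "(x - 1) * (\<Sum>i<q. x ^ i) = 0"
    using assms(2) by (simp flip: power_diff_1_eq)
  ultimately have "(\<Sum>i<q. x ^ i) = 0" by simp
  then have "of_int (int q) / 2 = - (\<Sum>i<q. (x ^ i - 1) / 2)"
    by (simp add: sum_subtractf flip: sum_divide_distrib)
  moreover have "two_integral (\<Sum>i<q. (x ^ i - 1) / 2)"
    using one_mod_two_power[OF assms(1)] unfolding one_mod_two_def by (intro two_integral_sum)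
  ultimately have "two_integral (of_int (int q) / 2 :: 'a)"
    by (simp add: two_integral_minus)
  then have "even (int q)" by (rule two_integral_half_int_imp_even)
  then show False using assms(3) by simp
qed

lemma one_mod_two_root_of_unity:
  assumes "one_mod_two x" "x ^ n = 1" "0 < n"
  shows "x = 1 \<or> x = - 1"
  using assms
proof (induction n arbitrary: x rule: less_induct)
  case (less n)
  show ?case
  proof (cases "even n")
    case True
    then obtain k where k: "n = 2 * k" "0 < k" "k < n" using less.prems(3) by auto
    have "(x ^ 2) ^ k = 1" using less.prems(2) k(1) by (simp flip: power_mult)
    then have "x ^ 2 = 1 \<or> x ^ 2 = - 1"
      using less.IH[OF k(3)] one_mod_two_power[OF less.prems(1)] k(2) by blast
    then have "x ^ 2 = 1" using one_mod_two_square_neq_minus_one[OF less.prems(1)] by blast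
    then show ?thesis by (simp add: power2_eq_1_iff)
  next
    case False
    then show ?thesis using one_mod_two_odd_root_of_unity less.prems by blast
  qed
qed

lemma two_power_exponent_le:
  fixes u w :: "'a::field_char_0"
  assumes "2 ^ m1 * u = 2 ^ m2 * w" "one_mod_two u" "two_integral w"
  shows "m2 \<le> m1"
proof (rule ccontr)
  assume "\<not> m2 \<le> m1"
  define d where "d = m2 - m1"
  have "0 < d" using \<open>\<not> m2 \<le> m1\<close> unfolding d_def by simp
  have "(2::'a) ^ m2 = 2 ^ m1 * 2 ^ d"
    unfolding d_def using \<open>\<not> m2 \<le> m1\<close> by (simp flip: power_add)
  then have "u = 2 ^ d * w" using assms(1) by simp
  then have "1 / 2 ^ d = w * (1 / u)" using one_mod_two_inverse(1)[OF assms(2)] by simp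
  moreover have "two_integral (w * (1 / u))"
    using assms(3) one_mod_two_inverse(2)[OF assms(2)] by (rule two_integral_mult)
  ultimately show False using not_two_integral_inverse_power_2[where 'a = 'a, OF \<open>0 < d\<close>] by simp
qed

section \<open>The tangent equation on the unit circle\<close>

lemma one_mod_two_solution_factor:
  assumes "1 \<le> m" "two_integral z"
  shows "one_mod_two (2 ^ m * z + (2 ^ m - 1))"
proof -
  have "(2 ^ m * z + (2 ^ m - 1) - 1) / 2 = 2 ^ (m - 1) * (z + 1) - 1"
    using assms(1) by (cases m) (simp_all add: field_simps)
  moreover have "two_integral (2 ^ (m - 1) * (z + 1) - 1)"
    using assms(2)
    by (intro two_integral_diff two_integral_mult two_integral_add two_integral_power) simp_all
  ultimately show ?thesis unfolding one_mod_two_def by metis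
qed

lemma two_integral_inverse_unit_circle:
  assumes "cmod z = 1" "two_integral z"
  shows "two_integral (1 / z)"
proof -
  have "z * cnj z = 1" using complex_norm_square[of z] assms(1) by simp
  then have "1 / z = cnj z" by (metis divide_eq_eq mult.commute mult_zero_left zero_neq_one)
  then show ?thesis using two_integral_cnj[OF assms(2)] by simp
qed

text \<open>With \<open>z = e^(ik)\<close>, the tangent equation of \<open>Ssol\<close> becomes this polynomial equation.\<close>
definition circle_solution :: "nat \<Rightarrow> nat \<Rightarrow> complex \<Rightarrow> bool" where
  "circle_solution m N z \<longleftrightarrow> cmod z = 1 \<and> z \<noteq> 1 \<and> z \<noteq> -1 \<and>
     z ^ (2 * N) * (2 ^ m * z + (2 ^ m - 1)) = (2 ^ m - 1) * z + 2 ^ m"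

lemma tan_mult_cis_double:
  assumes "cos x \<noteq> 0"
  shows "of_real (tan x) * (cis (2 * x) + 1) = - \<i> * (cis (2 * x) - 1)"
proof -
  have c: "cos (2 * x) + 1 = 2 * cos x * cos x" by (simp add: cos_double_cos power2_eq_square)
  have s: "1 - cos (2 * x) = 2 * sin x * sin x" by (simp add: cos_double_sin power2_eq_square)
  have "tan x * (cos (2 * x) + 1) = sin (2 * x)"
    unfolding c sin_double tan_def using assms by (simp add: field_simps)
  moreover have "tan x * sin (2 * x) = 1 - cos (2 * x)"
    unfolding s sin_double tan_def using assms by (simp add: field_simps)
  ultimately show ?thesis by (simp add: complex_eq_iff algebra_simps)
qed

lemma tan_equation_imp_cis_equation:
  assumes "cos (k / 2) \<noteq> 0" "cos (real N * k) \<noteq> 0"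
    and eq: "- (1 / (2 ^ (m + 1) - 1)) * tan (k / 2) = tan (real N * k)"
  shows "cis k ^ (2 * N) * (2 ^ m * cis k + (2 ^ m - 1)) = (2 ^ m - 1) * cis k + 2 ^ m"
proof -
  define z where "z = cis k"
  define Z where "Z = z ^ (2 * N)"
  define c :: real where "c = 2 ^ (m + 1) - 1"
  have "(1::real) < 2 * 2 ^ m" using one_le_power[of "2::real" m] by linarith
  then have "c > 0" unfolding c_def by simp
  have t1: "of_real (tan (k / 2)) * (z + 1) = - \<i> * (z - 1)"
    using tan_mult_cis_double[OF assms(1)] unfolding z_def by simp
  have "Z = cis (2 * (real N * k))" unfolding Z_def z_def by (simp add: DeMoivre mult_ac)
  then have t2: "of_real (tan (real N * k)) * (Z + 1) = - \<i> * (Z - 1)"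
    using tan_mult_cis_double[OF assms(2)] by simp
  have tan_eq: "tan (k / 2) = - c * tan (real N * k)"
    using eq \<open>c > 0\<close> unfolding c_def by (simp add: field_simps)
  have "- \<i> * (z - 1) * (Z + 1) = of_real (tan (k / 2)) * (z + 1) * (Z + 1)"
    using t1 by simp
  also have "\<dots> = - of_real c * (of_real (tan (real N * k)) * (Z + 1)) * (z + 1)"
    unfolding tan_eq by (simp add: algebra_simps)
  also have "\<dots> = - of_real c * (- \<i> * (Z - 1)) * (z + 1)"
    unfolding t2 ..
  finally have "- \<i> * ((z - 1) * (Z + 1) + of_real c * (Z - 1) * (z + 1)) = 0"
    by (simp add: algebra_simps)
  then have "(z - 1) * (Z + 1) + of_real c * (Z - 1) * (z + 1) = 0"
    by simp
  moreover have "(of_real c :: complex) = 2 * 2 ^ m - 1" unfolding c_def by simp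
  ultimately have "2 * (Z * (2 ^ m * z + (2 ^ m - 1)) - ((2 ^ m - 1) * z + 2 ^ m)) = 0"
    by (simp add: algebra_simps)
  then have "Z * (2 ^ m * z + (2 ^ m - 1)) - ((2 ^ m - 1) * z + 2 ^ m) = 0"
    by (metis mult_eq_0_iff zero_neq_numeral)
  then show ?thesis unfolding Z_def z_def by (simp only: right_minus_eq)
qed

lemma Ssol_imp_circle_solution:
  assumes "k \<in> Ssol m N"
  shows "circle_solution m N (cis k)"
proof -
  have k: "0 < k" "k < pi" and "cos (real N * k) \<noteq> 0"
    and "- (1 / (2 ^ (m + 1) - 1)) * tan (k / 2) = tan (real N * k)"
    using assms unfolding Ssol_def by auto
  moreover have "cos (k / 2) \<noteq> 0"
    using k by (intro cos_gt_zero_pi[THEN less_imp_neq, symmetric]) auto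
  moreover have "sin k > 0" using k by (rule sin_gt_zero)
  then have "cis k \<noteq> 1" "cis k \<noteq> - 1" by (auto simp: complex_eq_iff)
  ultimately show ?thesis
    unfolding circle_solution_def using tan_equation_imp_cis_equation by auto
qed

lemma piRat_imp_cis_root_of_unity:
  assumes "k \<in> piRat"
  obtains n where "0 < n" "cis k ^ n = 1"
proof -
  obtain q where q: "k = pi * of_rat q" using assms unfolding piRat_def by auto
  obtain a b where ab: "quotient_of q = (a, b)" by (cases "quotient_of q")
  have "b > 0" using quotient_of_denom_pos[OF ab] .
  have "real (2 * nat b) * k = 2 * pi * of_int a"
    unfolding q quotient_of_div[OF ab] using \<open>b > 0\<close> by (simp add: of_rat_divide field_simps)
  then have "cis k ^ (2 * nat b) = cis (2 * pi * of_int a)" by (simp only: DeMoivre)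
  also have "\<dots> = 1" by simp
  finally have "cis k ^ (2 * nat b) = 1" .
  then show ?thesis using \<open>b > 0\<close> that[of "2 * nat b"] by simp
qed

lemma circle_solution_factor_nonzero:
  assumes "circle_solution m N z"
  shows "2 ^ m * z + (2 ^ m - 1) \<noteq> 0"
proof
  assume "2 ^ m * z + (2 ^ m - 1) = 0"
  moreover from this have "(2 ^ m - 1) * z + 2 ^ m = 0"
    using assms unfolding circle_solution_def by simp
  ultimately have "z - 1 = 0" by (simp add: algebra_simps)
  then show False using assms unfolding circle_solution_def by simp
qed

lemma circle_solution_key_identity:
  assumes "circle_solution m N z" "1 \<le> N"
  shows "z * (2 ^ m * z + (2 ^ m - 1)) * (z ^ (2 * N - 1) - 1) = 2 ^ m * (1 - z ^ 2)"
proof -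
  have "z ^ (2 * N) = z * z ^ (2 * N - 1)"
    using assms(2) by (simp flip: power_Suc)
  then show ?thesis
    using assms(1) unfolding circle_solution_def by (simp add: algebra_simps power2_eq_square)
qed

lemma circle_solution_power_quotient:
  assumes "1 \<le> m" "1 \<le> N" "circle_solution m N z" "two_integral z"
  shows "two_integral ((z ^ (2 * N - 1) - 1) / 2 ^ m)"
proof -
  define A where "A = 2 ^ m * z + (2 ^ m - 1)"
  have "z \<noteq> 0" using assms(3) unfolding circle_solution_def by auto
  moreover have "A \<noteq> 0" using circle_solution_factor_nonzero[OF assms(3)] unfolding A_def .
  ultimately have eq: "(z ^ (2 * N - 1) - 1) / 2 ^ m = (1 - z ^ 2) * (1 / z) * (1 / A)"
    using circle_solution_key_identity[OF assms(3,2)] unfolding A_def[symmetric]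
    by (simp add: field_simps)
  have "two_integral (1 / z)"
    using assms(3,4) unfolding circle_solution_def by (simp add: two_integral_inverse_unit_circle)
  moreover have "two_integral (1 / A)"
    unfolding A_def by (rule one_mod_two_inverse(2)[OF one_mod_two_solution_factor[OF assms(1,4)]])
  ultimately show ?thesis
    unfolding eq using assms(4)
    by (intro two_integral_mult two_integral_diff two_integral_power) simp_all
qed

lemma circle_solution_power_one_mod_two:
  assumes "1 \<le> m" "1 \<le> N" "circle_solution m N z" "two_integral z"
  shows "one_mod_two (z ^ (2 * N - 1))"
proof -
  have eq: "(z ^ (2 * N - 1) - 1) / 2 = 2 ^ (m - 1) * ((z ^ (2 * N - 1) - 1) / 2 ^ m)"
    using assms(1) by (cases m) simp_all
  show ?thesis
    unfolding one_mod_two_def eq using circle_solution_power_quotient[OF assms]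
    by (intro two_integral_mult two_integral_power) simp_all
qed

section \<open>Roots of unity are not solutions\<close>

lemma circle_solution_power_neq_1:
  assumes "1 \<le> N" "circle_solution m N z"
  shows "z ^ (2 * N - 1) \<noteq> 1"
proof
  assume "z ^ (2 * N - 1) = 1"
  moreover have "z ^ (2 * N) = z * z ^ (2 * N - 1)" using assms(1) by (simp flip: power_Suc)
  ultimately have "2 ^ m * (z ^ 2 - 1) = 0"
    using assms(2) unfolding circle_solution_def by (simp add: algebra_simps power2_eq_square)
  then have "z ^ 2 = 1" by simp
  then show False using assms(2) unfolding circle_solution_def by (simp add: power2_eq_1_iff)
qed

lemma circle_solution_power_neq_minus_1:
  assumes m: "1 \<le> m" and N: "1 \<le> N" and sol: "circle_solution m N z" and z: "two_integral z"
  shows "z ^ (2 * N - 1) \<noteq> - 1"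
proof
  define \<eta> where "\<eta> = z ^ (2 * N - 1)"
  assume "z ^ (2 * N - 1) = - 1"
  then have \<eta>: "\<eta> = - 1" unfolding \<eta>_def .
  have "1 / 2 ^ (m - 1) = - ((\<eta> - 1) / 2 ^ m)"
    using \<eta> m by (cases m) simp_all
  moreover have "two_integral (- ((\<eta> - 1) / 2 ^ m))"
    unfolding \<eta>_def using circle_solution_power_quotient[OF m N sol z] by (rule two_integral_minus)
  ultimately have "\<not> 0 < m - 1" using not_two_integral_inverse_power_2[where 'a = complex] by metis
  then have "m = 1" using m by simp
  moreover have "z ^ (2 * N) = z * \<eta>" unfolding \<eta>_def using N by (simp flip: power_Suc)
  ultimately have "2 * (z ^ 2 + z + 1) = 0"
    using sol \<eta> unfolding circle_solution_def by (simp add: algebra_simps power2_eq_square)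
  then have "z ^ 2 + z + 1 = 0" by (metis mult_eq_0_iff zero_neq_numeral)
  moreover have "z ^ 3 - 1 = (z - 1) * (z ^ 2 + z + 1)"
    by (simp add: power2_eq_square power3_eq_cube algebra_simps)
  ultimately have "z ^ 3 = 1" by simp
  have "\<eta> ^ 3 = (z ^ 3) ^ (2 * N - 1)" unfolding \<eta>_def by (simp flip: power_mult add: mult.commute)
  then have "\<eta> ^ 3 = 1" using \<open>z ^ 3 = 1\<close> by simp
  then show False using \<eta> by simp
qed

lemma circle_solution_not_root_of_unity:
  assumes m: "1 \<le> m" and N: "1 \<le> N" and sol: "circle_solution m N z" and "0 < n"
  shows "z ^ n \<noteq> 1"
proof
  assume zn: "z ^ n = 1"
  have "algebraic_int z"
  proof (rule algebraic_int_root[of 1 "monom 1 n"])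
    show "poly (monom 1 n) z = 1" using zn by (simp add: poly_monom)
  qed (use \<open>0 < n\<close> in \<open>simp_all add: degree_monom_eq coeff_monom\<close>)
  then have z: "two_integral z" by (rule algebraic_int_imp_two_integral)
  have "(z ^ (2 * N - 1)) ^ n = (z ^ n) ^ (2 * N - 1)" by (simp flip: power_mult add: mult.commute)
  then have "(z ^ (2 * N - 1)) ^ n = 1" using zn by simp
  then have "z ^ (2 * N - 1) = 1 \<or> z ^ (2 * N - 1) = - 1"
    using one_mod_two_root_of_unity[OF circle_solution_power_one_mod_two[OF m N sol z]] \<open>0 < n\<close>
    by blast
  then show False
    using circle_solution_power_neq_1[OF N sol] circle_solution_power_neq_minus_1[OF m N sol z]
    by blast
qed

lemma circle_solution_unique_N:
  assumes "1 \<le> m" "1 \<le> N1" "1 \<le> N2" "circle_solution m N1 z" "circle_solution m N2 z"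
  shows "N1 = N2"
proof -
  define A where "A = 2 ^ m * z + (2 ^ m - 1)"
  define n where "n = 2 * (max N1 N2 - min N1 N2)"
  have "z \<noteq> 0" using assms(4) unfolding circle_solution_def by auto
  have "A \<noteq> 0" using circle_solution_factor_nonzero[OF assms(4)] unfolding A_def .
  have "z ^ (2 * N1) * A = z ^ (2 * N2) * A"
    using assms(4,5) unfolding circle_solution_def A_def by simp
  then have "z ^ (2 * max N1 N2) = z ^ (2 * min N1 N2)"
    using \<open>A \<noteq> 0\<close> by (simp add: max_def min_def)
  moreover have "2 * max N1 N2 = 2 * min N1 N2 + n" unfolding n_def by simp
  then have "z ^ (2 * max N1 N2) = z ^ (2 * min N1 N2) * z ^ n" by (metis power_add)
  ultimately have "z ^ n = 1" using \<open>z \<noteq> 0\<close> by simp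
  then have "\<not> 0 < n"
    using circle_solution_not_root_of_unity[OF assms(1,2,4)] by blast
  then show ?thesis unfolding n_def by simp
qed

section \<open>Solutions for different exponents\<close>

definition power_diff_quotient :: "nat \<Rightarrow> int poly" where
  "power_diff_quotient n = (\<Sum>p<n. [:1, -1:] ^ p * [:0, 1:] ^ (n - 1 - p))"

lemma power_diff_quotient_mult: "[:1, -2:] * power_diff_quotient n = [:1, -1:] ^ n - [:0, 1:] ^ n"
proof (cases n)
  case (Suc k)
  then show ?thesis
    using diff_power_eq_sum[of "[:1, -1:] :: int poly" k "[:0, 1:]"]
    unfolding power_diff_quotient_def by simp
qed (simp add: power_diff_quotient_def)

lemma power_diff_quotient_coeffs:
  assumes "even n" "0 < n"
  shows "degree (power_diff_quotient n) \<le> n - 1"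
    "coeff (power_diff_quotient n) (n - 1) = 0"
    "coeff (power_diff_quotient n) 0 = 1"
proof -
  define U where "U = power_diff_quotient n"
  have U: "[:1, -2:] * U = [:1, -1:] ^ n - [:0, 1:] ^ n"
    unfolding U_def by (rule power_diff_quotient_mult)
  have "degree ([:1, -1:] ^ n - [:0, 1:] ^ n :: int poly) \<le> n"
    by (intro degree_diff_le order.trans[OF degree_power_le]) simp_all
  then show deg: "degree U \<le> n - 1"
    using U degree_mult_eq[of "[:1, -2:]" U] by (cases "U = 0") (simp_all del: mult_pCons_left)
  obtain k where k: "n = Suc k" using \<open>0 < n\<close> by (cases n) auto
  have "coeff U (Suc k) - 2 * coeff U k = coeff ([:1, -1:] ^ n - [:0, 1:] ^ n :: int poly) n"
    using arg_cong[OF U, of "\<lambda>p. coeff p n"] k by simp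
  moreover have "coeff U (Suc k) = 0" using deg k by (simp add: coeff_eq_0)
  moreover have "coeff ([:1, -1:] ^ n :: int poly) n = 1"
    using lead_coeff_power[of "[:1, -1:] :: int poly" n]
      degree_power_eq[of "[:1, -1:] :: int poly" n]
      \<open>even n\<close> by simp
  moreover have "coeff ([:0, 1:] ^ n :: int poly) n = 1"
    by (metis coeff_monom monom_altdef smult_1_left)
  ultimately show "coeff U (n - 1) = 0" using k by simp
  have "coeff ([:1, -2:] * U) 0 = coeff ([:1, -1:] ^ n - [:0, 1:] ^ n) 0" using U by simp
  then show "coeff U 0 = 1" using \<open>0 < n\<close> by (simp add: coeff_mult_0 poly_0_coeff_0[symmetric])
qed

text \<open>Substituting \<open>z = 1/v - 1\<close> into the equation and clearing denominators gives
  \<open>(2^m - v) (1 - v)^n = v^n (2^m - 1 + v)\<close> with \<open>n = 2N\<close>; dividing out the spurious root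
  \<open>v = 1/2\<close> (i.e. \<open>z = 1\<close>) leaves this polynomial, which is monic.\<close>
definition reciprocal_poly :: "nat \<Rightarrow> nat \<Rightarrow> int poly" where
  "reciprocal_poly m n = [:2 ^ m, -1:] * power_diff_quotient n + monom 1 n"

lemma reciprocal_poly_coeffs:
  assumes "even n" "0 < n" "1 \<le> m"
  shows "lead_coeff (reciprocal_poly m n) = 1"
    "coeff (reciprocal_poly m n) 0 = 2 ^ m"
    "odd (coeff (reciprocal_poly m n) 1)"
proof -
  define U where "U = power_diff_quotient n"
  note U = power_diff_quotient_coeffs[OF assms(1,2), folded U_def]
  have coeff: "coeff (reciprocal_poly m n) j =
      2 ^ m * coeff U j - (if j = 0 then 0 else coeff U (j - 1)) + (if j = n then 1 else 0)" for j
    unfolding reciprocal_poly_def U_def[symmetric] by (cases j) (simp_all add: coeff_monom)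
  have "degree ([:2 ^ m, -1:] * U) \<le> n"
    using degree_mult_le[of "[:2 ^ m, -1:]" U] U(1) assms(2) by simp
  then have "degree (reciprocal_poly m n) \<le> n"
    unfolding reciprocal_poly_def U_def[symmetric]
    by (intro degree_add_le) (simp_all add: degree_monom_le)
  moreover have "coeff (reciprocal_poly m n) n = 1"
    using coeff[of n] U(1,2) assms(2) by (simp add: coeff_eq_0)
  ultimately show "lead_coeff (reciprocal_poly m n) = 1"
    by (metis le_antisym le_degree zero_neq_one)
  show "coeff (reciprocal_poly m n) 0 = 2 ^ m"
    using coeff[of 0] U(3) assms(2) by simp
  have "n \<noteq> 1" using assms(1) by auto
  then show "odd (coeff (reciprocal_poly m n) 1)"
    using coeff[of 1] U(3) assms(3) by simp
qed

lemma poly_reciprocal_poly: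
  fixes v :: "'a::field_char_0"
  shows "(1 - 2 * v) * poly (of_int_poly (reciprocal_poly m n)) v =
    (2 ^ m - v) * (1 - v) ^ n - v ^ n * (2 ^ m - 1 + v)"
proof -
  define u where "u = poly (of_int_poly (power_diff_quotient n)) v"
  have "poly (of_int_poly [:1, -2:]) v = 1 - 2 * v" by simp
  then have "(1 - 2 * v) * u = poly (of_int_poly ([:1, -2:] * power_diff_quotient n)) v"
    unfolding u_def by (simp only: of_int_poly_hom.hom_mult poly_mult)
  also have "\<dots> = (1 - v) ^ n - v ^ n"
    unfolding power_diff_quotient_mult
    by (simp add: of_int_poly_hom.hom_minus of_int_poly_hom.hom_power)
  finally have u: "(1 - 2 * v) * u = (1 - v) ^ n - v ^ n" .
  have "poly (of_int_poly (reciprocal_poly m n)) v =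
      poly (of_int_poly [:2 ^ m, -1:]) v * u + poly (of_int_poly (monom 1 n)) v"
    unfolding reciprocal_poly_def u_def
    by (simp only: of_int_poly_hom.hom_add of_int_poly_hom.hom_mult poly_add poly_mult)
  also have "\<dots> = (2 ^ m - v) * u + v ^ n" by (simp add: poly_monom)
  finally have p: "poly (of_int_poly (reciprocal_poly m n)) v = (2 ^ m - v) * u + v ^ n" .
  have "(1 - 2 * v) * poly (of_int_poly (reciprocal_poly m n)) v =
      (2 ^ m - v) * ((1 - 2 * v) * u) + (1 - 2 * v) * v ^ n"
    unfolding p by (simp add: algebra_simps)
  also have "\<dots> = (2 ^ m - v) * ((1 - v) ^ n - v ^ n) + (1 - 2 * v) * v ^ n"
    unfolding u ..
  finally show ?thesis by (simp add: algebra_simps)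
qed

lemma circle_solution_reciprocal_root:
  assumes "circle_solution m N z"
  shows "poly (of_int_poly (reciprocal_poly m (2 * N))) (1 / (1 + z)) = 0"
proof -
  define w where "w = 1 + z"
  define A where "A = 2 ^ m * z + (2 ^ m - 1)"
  define B where "B = (2 ^ m - 1) * z + 2 ^ m"
  have "w \<noteq> 0" "z \<noteq> 1" using assms unfolding circle_solution_def w_def by (auto simp: add_eq_0_iff)
  have e: "2 ^ m - 1 / w = A / w" "1 - 1 / w = z / w" "2 ^ m - 1 + 1 / w = B / w"
    using \<open>w \<noteq> 0\<close> unfolding w_def A_def B_def by (simp_all add: field_simps)
  have "(2 ^ m - 1 / w) * (1 - 1 / w) ^ (2 * N) - (1 / w) ^ (2 * N) * (2 ^ m - 1 + 1 / w) =
      A / w * (z / w) ^ (2 * N) - (1 / w) ^ (2 * N) * (B / w)"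
    unfolding e ..
  also have "\<dots> = (z ^ (2 * N) * A - B) / (w ^ (2 * N) * w)"
    using \<open>w \<noteq> 0\<close> by (simp add: power_divide field_simps)
  also have "\<dots> = 0" using assms unfolding circle_solution_def A_def B_def by simp
  finally have "(1 - 2 * (1 / w)) * poly (of_int_poly (reciprocal_poly m (2 * N))) (1 / w) = 0"
    unfolding poly_reciprocal_poly .
  moreover have "1 - 2 * (1 / w) \<noteq> 0"
    using \<open>w \<noteq> 0\<close> \<open>z \<noteq> 1\<close> unfolding w_def by (simp add: field_simps)
  ultimately have "poly (of_int_poly (reciprocal_poly m (2 * N))) (1 / w) = 0"
    by (simp only: mult_eq_0_iff) blast
  then show ?thesis unfolding w_def .
qed

lemma circle_solution_reciprocal_relation:
  assumes "1 \<le> m" "1 \<le> N" "circle_solution m N z"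
  obtains q Y where "odd q" "algebraic_int Y" "2 ^ m = 1 / (1 + z) * (of_int q + 1 / (1 + z) * Y)"
proof -
  define v where "v = 1 / (1 + z)"
  define P where "P = reciprocal_poly m (2 * N)"
  have P: "lead_coeff P = 1" "coeff P 0 = 2 ^ m" "odd (coeff P 1)"
    unfolding P_def using reciprocal_poly_coeffs[of "2 * N" m] assms(1,2) by simp_all
  have root: "poly (of_int_poly P) v = 0"
    unfolding P_def v_def by (rule circle_solution_reciprocal_root[OF assms(3)])
  then have "algebraic_int v" unfolding algebraic_int_altdef_ipoly using P(1) by blast
  obtain a Q where PQ: "P = pCons a Q" by (cases P)
  obtain b R where QR: "Q = pCons b R" by (cases Q)
  have "a = 2 ^ m" "odd b" using P(2,3) unfolding PQ QR by simp_all
  have "0 = 2 ^ m + v * (of_int b + v * poly (of_int_poly R) v)"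
    using root unfolding PQ QR \<open>a = 2 ^ m\<close> poly_of_int_poly_pCons by simp
  then have "2 ^ m = v * (of_int (- b) + v * (- poly (of_int_poly R) v))"
    by (simp add: algebra_simps eq_neg_iff_add_eq_0)
  moreover have "algebraic_int (- poly (of_int_poly R) v)"
    using algebraic_int_poly_of_int[OF \<open>algebraic_int v\<close>] by simp
  moreover have "odd (- b)" using \<open>odd b\<close> by simp
  ultimately show ?thesis using that unfolding v_def by blast
qed

lemma two_integral_inverse_of_relations:
  fixes v :: "'a::field_char_0"
  assumes "m1 < m2" "odd q1" "odd q2" "algebraic_int Y1" "algebraic_int Y2"
    and rel1: "2 ^ m1 = v * (of_int q1 + v * Y1)" and rel2: "2 ^ m2 = v * (of_int q2 + v * Y2)"
  shows "two_integral (1 / v)"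
proof -
  define d where "d = m2 - m1"
  have "v \<noteq> 0" using rel1 by auto
  have "(2::'a) ^ m2 = 2 ^ d * 2 ^ m1"
    unfolding d_def using assms(1) by (simp flip: power_add)
  then have "v * (of_int q2 + v * Y2) = v * (2 ^ d * (of_int q1 + v * Y1))"
    unfolding rel1 rel2 by (simp add: ac_simps)
  then have "of_int q2 + v * Y2 = 2 ^ d * (of_int q1 + v * Y1)"
    using mult_left_cancel[OF \<open>v \<noteq> 0\<close>] by blast
  then have "of_int q2 = 2 ^ d * (of_int q1 + v * Y1) - v * Y2" by (simp add: eq_diff_eq)
  then have "of_int (q2 - 2 ^ d * q1) = v * (2 ^ d * Y1 - Y2)" by (simp add: algebra_simps)
  then have eq: "of_int (q2 - 2 ^ d * q1) * (1 / v) = 2 ^ d * Y1 - Y2"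
    using \<open>v \<noteq> 0\<close> by simp
  show ?thesis
    unfolding two_integral_def
  proof (intro exI conjI)
    show "odd (q2 - 2 ^ d * q1)" using assms(1,3) unfolding d_def by simp
    show "algebraic_int (of_int (q2 - 2 ^ d * q1) * (1 / v))"
      unfolding eq using assms(4,5)
      by (simp add: algebraic_int_diff algebraic_int_mult algebraic_int_power)
  qed
qed

lemma circle_solutions_two_integral:
  assumes "1 \<le> m1" "1 \<le> m2" "m1 \<noteq> m2" "1 \<le> N1" "1 \<le> N2"
    "circle_solution m1 N1 z" "circle_solution m2 N2 z"
  shows "two_integral z"
proof -
  obtain q1 Y1 where 1: "odd q1" "algebraic_int Y1"
    "2 ^ m1 = 1 / (1 + z) * (of_int q1 + 1 / (1 + z) * Y1)"
    using circle_solution_reciprocal_relation[OF assms(1,4,6)] by blast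
  obtain q2 Y2 where 2: "odd q2" "algebraic_int Y2"
    "2 ^ m2 = 1 / (1 + z) * (of_int q2 + 1 / (1 + z) * Y2)"
    using circle_solution_reciprocal_relation[OF assms(2,5,7)] by blast
  have "two_integral (1 / (1 / (1 + z)))"
  proof (cases "m1 < m2")
    case True
    show ?thesis by (rule two_integral_inverse_of_relations[OF True 1(1) 2(1) 1(2) 2(2) 1(3) 2(3)])
  next
    case False
    then have "m2 < m1" using assms(3) by simp
    show ?thesis
      by (rule two_integral_inverse_of_relations[OF \<open>m2 < m1\<close> 2(1) 1(1) 2(2) 1(2) 2(3) 1(3)])
  qed
  then have "two_integral (1 + z - 1)" by (intro two_integral_diff) simp_all
  then show ?thesis by simp
qed

lemma circle_solution_unique_m:
  assumes m: "1 \<le> m1" "1 \<le> m2" and N: "1 \<le> N1" "1 \<le> N2"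
    and sol: "circle_solution m1 N1 z" "circle_solution m2 N2 z"
  shows "m1 = m2"
proof (rule ccontr)
  assume "m1 \<noteq> m2"
  define A1 where "A1 = 2 ^ m1 * z + (2 ^ m1 - 1)"
  define A2 where "A2 = 2 ^ m2 * z + (2 ^ m2 - 1)"
  have z: "two_integral z" using circle_solutions_two_integral[OF m \<open>m1 \<noteq> m2\<close> N sol] .
  obtain S T where ST: "one_mod_two S" "one_mod_two T"
    "(z ^ (2 * N1 - 1) - 1) * T = (z ^ (2 * N2 - 1) - 1) * S"
    using odd_powers_minus_one_associated[OF z
        circle_solution_power_one_mod_two[OF m(1) N(1) sol(1) z]
        circle_solution_power_one_mod_two[OF m(2) N(2) sol(2) z]] N
    by auto
  have k1: "z * A1 * (z ^ (2 * N1 - 1) - 1) = 2 ^ m1 * (1 - z ^ 2)"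
    using circle_solution_key_identity[OF sol(1) N(1)] unfolding A1_def .
  have k2: "z * A2 * (z ^ (2 * N2 - 1) - 1) = 2 ^ m2 * (1 - z ^ 2)"
    using circle_solution_key_identity[OF sol(2) N(2)] unfolding A2_def .
  have "(1 - z ^ 2) * (2 ^ m1 * (A2 * T)) = z * A1 * (z ^ (2 * N1 - 1) - 1) * A2 * T"
    unfolding k1 by (simp add: ac_simps)
  also have "\<dots> = z * A1 * A2 * ((z ^ (2 * N2 - 1) - 1) * S)"
    unfolding ST(3)[symmetric] by (simp add: ac_simps)
  also have "\<dots> = (1 - z ^ 2) * (2 ^ m2 * (A1 * S))"
    using k2 by (simp add: ac_simps)
  finally have eq: "2 ^ m1 * (A2 * T) = 2 ^ m2 * (A1 * S)"
    using sol(1) unfolding circle_solution_def by (auto simp: power2_eq_1_iff)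
  have A: "one_mod_two A1" "one_mod_two A2"
    unfolding A1_def A2_def using one_mod_two_solution_factor m z by auto
  have AT: "one_mod_two (A2 * T)" and AS: "one_mod_two (A1 * S)"
    using one_mod_two_mult A ST(1,2) by blast+
  have "m2 \<le> m1"
    using eq AT one_mod_two_imp_two_integral[OF AS] by (rule two_power_exponent_le)
  moreover have "m1 \<le> m2"
    using eq[symmetric] AS one_mod_two_imp_two_integral[OF AT] by (rule two_power_exponent_le)
  ultimately show False using \<open>m1 \<noteq> m2\<close> by simp
qed

lemma Sall_disjoint_piRat:
  assumes "1 \<le> m"
  shows "Sall m \<inter> piRat = {}"
proof -
  have False if k: "k \<in> Ssol m N" and N: "1 \<le> N" and rat: "k \<in> piRat" for k N
  proof -
    obtain n where "0 < n" "cis k ^ n = 1" using piRat_imp_cis_root_of_unity[OF rat] .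
    then show False
      using circle_solution_not_root_of_unity[OF assms N Ssol_imp_circle_solution[OF k]] by simp
  qed
  then show ?thesis unfolding Sall_def by blast
qed

lemma Sall_disjoint:
  assumes "1 \<le> m1" "1 \<le> m2" "m1 \<noteq> m2"
  shows "Sall m1 \<inter> Sall m2 = {}"
  using assms(3)
    circle_solution_unique_m[OF assms(1,2) _ _ Ssol_imp_circle_solution Ssol_imp_circle_solution]
  unfolding Sall_def by blast

lemma Ssol_disjoint:
  assumes "1 \<le> m" "1 \<le> N1" "1 \<le> N2" "N1 \<noteq> N2"
  shows "Ssol m N1 \<inter> Ssol m N2 = {}"
  using assms(4)
    circle_solution_unique_N[OF assms(1-3) Ssol_imp_circle_solution Ssol_imp_circle_solution]
  by blast

theorem lemma11:
  shows "(\<forall>m1 m2. m1 \<ge> 1 \<longrightarrow> m2 \<ge> 1 \<longrightarrow> m1 \<noteq> m2 \<longrightarrow>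
            Sall m1 \<inter> Sall m2 = {} \<and> Sall m1 \<inter> piRat = {} \<and> Sall m2 \<inter> piRat = {})
       \<and> (\<forall>m N1 N2. m \<ge> 1 \<longrightarrow> N1 \<ge> 1 \<longrightarrow> N2 \<ge> 1 \<longrightarrow> N1 \<noteq> N2 \<longrightarrow>
            Ssol m N1 \<inter> Ssol m N2 = {})"
  using Sall_disjoint Sall_disjoint_piRat Ssol_disjoint by blast

end
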